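(* Let $X$ be a Baire topological space, $Y$ a metric space and $\mathcal F\subseteq Y^X$. (1) If $\mathcal F$ is equi-cliquish, then $EC(\mathcal F)$ is a dense $G_\delta$ subset of $X$; in particular this holds if $\mathcal F$ is equi-GLP. (2) If $X$ is a metric space and $\mathcal F$ is equi-Baire 1, then $EC(\mathcal F)$ is a dense $G_\delta$ subset of $X$.
   Context: $EC(\mathcal F)$ denotes the set of points $x\in X$ at which $\mathcal F$ is equicontinuous: for every $\varepsilon>0$ there is a neighborhood $U$ of $x$ with $d(f(x'),f(x))<\varepsilon$ for all $x'\in U$, $f\in\mathcal F$. A space is Baire if every nonempty open subset is nonmeager. A family of subsets of $X$ is discrete if each point has a neighborhood meeting at most one member; $\sigma$-discrete if it is a countable union of discrete families. $\mathcal F\subseteq Y^X$ (with $(Y,d)$ metric) is equi-GLP if for every $\varepsilon>0$ there is a $\sigma$-discrete family $\mathcal A_\varepsilon$ of closed subsets of $X$ with $X=\bigcup\mathcal A_\varepsilon$ and $\operatorname{diam}f(A)\le\varepsilon$ for all $A\in\mathcal A_\varepsilon$ and all $f\in\mathcal F$; equi-cliquish if for every $\varepsilon>0$ and every nonempty open $U\subseteq X$ there is a nonempty open $O\subseteq U$ with $\operatorname{diam}f(O)<\varepsilon$ for all $f\in\mathcal F$; for $X$ metric with metric $\rho$, equi-Baire 1 if for every $\varepsilon>0$ there is $\delta_\varepsilon\colon X\to(0,\infty)$ such that for all $x,y\in X$ and $f\in\mathcal F$, $\rho(x,y)<\min\{\delta_\varepsilon(x),\delta_\varepsilon(y)\}$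 implies $d(f(x),f(y))<\varepsilon$. *)

theory Defs
  imports "HOL-Analysis.Analysis"
begin

definition nowhere_dense_in :: "'a topology \<Rightarrow> 'a set \<Rightarrow> bool" where
  "nowhere_dense_in X S \<longleftrightarrow> S \<subseteq> topspace X \<and> X interior_of (X closure_of S) = {}"

definition meager_in :: "'a topology \<Rightarrow> 'a set \<Rightarrow> bool" where
  "meager_in X S \<longleftrightarrow> S \<subseteq> topspace X \<and>
     (\<exists>\<N>. countable \<N> \<and> (\<forall>N\<in>\<N>. nowhere_dense_in X N) \<and> S \<subseteq> \<Union>\<N>)"

definition Baire_space :: "'a topology \<Rightarrow> bool" where
  "Baire_space X \<longleftrightarrow> (\<forall>U. openin X U \<and> U \<noteq> {} \<longrightarrow> \<not> meager_in X U)"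

text \<open>Diameter with values in the extended reals (so unbounded sets have diameter \<infinity>;
  the empty set has diameter -\<infinity>, which is harmless for upper bounds).\<close>
definition ediam :: "'b::metric_space set \<Rightarrow> ereal" where
  "ediam S = (SUP p\<in>S \<times> S. ereal (dist (fst p) (snd p)))"

definition EC :: "'a topology \<Rightarrow> ('a \<Rightarrow> 'b::metric_space) set \<Rightarrow> 'a set" where
  "EC X F = {x \<in> topspace X. \<forall>\<epsilon>>0. \<exists>U. openin X U \<and> x \<in> U \<and>
              (\<forall>x'\<in>U. \<forall>f\<in>F. dist (f x') (f x) < \<epsilon>)}"

definition discrete_family_in :: "'a topology \<Rightarrow> 'a set set \<Rightarrow> bool" where
  "discrete_family_in X \<A> \<longleftrightarrow> (\<forall>x\<in>topspace X. \<exists>U. openin X U \<and> x \<in> U \<and>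
      (\<forall>A\<in>\<A>. \<forall>B\<in>\<A>. A \<inter> U \<noteq> {} \<and> B \<inter> U \<noteq> {} \<longrightarrow> A = B))"

definition sigma_discrete_in :: "'a topology \<Rightarrow> 'a set set \<Rightarrow> bool" where
  "sigma_discrete_in X \<A> \<longleftrightarrow>
     (\<exists>\<D> :: nat \<Rightarrow> 'a set set. (\<forall>n. discrete_family_in X (\<D> n)) \<and> \<A> = (\<Union>n. \<D> n))"

definition equi_GLP :: "'a topology \<Rightarrow> ('a \<Rightarrow> 'b::metric_space) set \<Rightarrow> bool" where
  "equi_GLP X F \<longleftrightarrow> (\<forall>\<epsilon>>0. \<exists>\<A>. sigma_discrete_in X \<A> \<and> (\<forall>A\<in>\<A>. closedin X A) \<and>
      \<Union>\<A> = topspace X \<and> (\<forall>A\<in>\<A>. \<forall>f\<in>F. ediam (f ` A) \<le> ereal \<epsilon>))"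

definition equi_cliquish :: "'a topology \<Rightarrow> ('a \<Rightarrow> 'b::metric_space) set \<Rightarrow> bool" where
  "equi_cliquish X F \<longleftrightarrow> (\<forall>\<epsilon>>0. \<forall>U. openin X U \<and> U \<noteq> {} \<longrightarrow>
      (\<exists>V. openin X V \<and> V \<noteq> {} \<and> V \<subseteq> U \<and> (\<forall>f\<in>F. ediam (f ` V) < ereal \<epsilon>)))"

definition equi_Baire1 :: "'a set \<Rightarrow> ('a \<Rightarrow> 'a \<Rightarrow> real) \<Rightarrow> ('a \<Rightarrow> 'b::metric_space) set \<Rightarrow> bool" where
  "equi_Baire1 M \<rho> F \<longleftrightarrow> (\<forall>\<epsilon>>0. \<exists>\<delta>. (\<forall>x\<in>M. \<delta> x > 0) \<and>
      (\<forall>x\<in>M. \<forall>y\<in>M. \<forall>f\<in>F. \<rho> x y < min (\<delta> x) (\<delta> y) \<longrightarrow> dist (f x) (f y) < \<epsilon>))"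

end

theory Submission
  imports Defs
begin

(* For \<epsilon> > 0 let O(\<epsilon>) = equi_oscillation_below X F \<epsilon> be the union of all open sets on
   which every f \<in> F oscillates by less than \<epsilon>. Each O(\<epsilon>) is open, EC(F) is the intersection
   of the O(1/n), and equi-cliquishness says precisely that every O(\<epsilon>) is dense; in a Baire
   space the intersection is then a dense G\<delta>.
   Equi-GLP and equi-Baire 1 families are equi-cliquish on a Baire space: a nonempty open U
   is covered by countably many sets (the members of the discrete subfamilies, resp. the sets
   where the gauge \<delta> exceeds 1/n), so by the Baire property one of them is dense in some
   nonempty open V \<subseteq> U, and on a small enough V every f \<in> F oscillates by less than \<epsilon>. *)

lemma dist_le_ediam: "x \<in> S \<Longrightarrow> y \<in> S \<Longrightarrow> ereal (dist x y) \<le> ediam S"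
  unfolding ediam_def by (rule SUP_upper2[where i="(x, y)"]) auto

lemma ediam_le: "(\<And>x y. x \<in> S \<Longrightarrow> y \<in> S \<Longrightarrow> dist x y \<le> e) \<Longrightarrow> ediam S \<le> ereal e"
  unfolding ediam_def by (rule SUP_least) auto

lemma ediam_mono: "S \<subseteq> T \<Longrightarrow> ediam S \<le> ediam T"
  unfolding ediam_def by (rule SUP_subset_mono) auto

lemma ediam_le_twice_radius:
  assumes "\<And>x. x \<in> S \<Longrightarrow> dist x c \<le> r"
  shows "ediam S \<le> ereal (2 * r)"
proof (rule ediam_le)
  fix x y assume "x \<in> S" "y \<in> S"
  then have "dist x c \<le> r" "dist y c \<le> r" by (simp_all add: assms)
  then show "dist x y \<le> 2 * r"
    using dist_triangle2[of x y c] by linarith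
qed

lemma discrete_family_inE:
  assumes "discrete_family_in X \<D>" "x \<in> topspace X"
  obtains V where "openin X V" "x \<in> V"
    "\<And>A B. A \<in> \<D> \<Longrightarrow> B \<in> \<D> \<Longrightarrow> A \<inter> V \<noteq> {} \<Longrightarrow> B \<inter> V \<noteq> {} \<Longrightarrow> A = B"
proof -
  from assms have "\<exists>V. openin X V \<and> x \<in> V \<and>
      (\<forall>A\<in>\<D>. \<forall>B\<in>\<D>. A \<inter> V \<noteq> {} \<and> B \<inter> V \<noteq> {} \<longrightarrow> A = B)"
    unfolding discrete_family_in_def by (rule bspec)
  then obtain V where "openin X V" "x \<in> V"
    and "\<forall>A\<in>\<D>. \<forall>B\<in>\<D>. A \<inter> V \<noteq> {} \<and> B \<inter> V \<noteq> {} \<longrightarrow> A = B"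
    by (elim exE conjE) simp
  then show ?thesis using that by blast
qed

lemma discrete_family_in_imp_locally_finite_in:
  assumes "discrete_family_in X \<D>" "\<Union>\<D> \<subseteq> topspace X"
  shows "locally_finite_in X \<D>"
  unfolding locally_finite_in_def
proof (intro conjI ballI)
  fix x assume "x \<in> topspace X"
  with assms(1) obtain V where V: "openin X V" "x \<in> V"
    and unique: "\<And>A B. A \<in> \<D> \<Longrightarrow> B \<in> \<D> \<Longrightarrow> A \<inter> V \<noteq> {} \<Longrightarrow> B \<inter> V \<noteq> {} \<Longrightarrow> A = B"
    by (rule discrete_family_inE) (rule that)
  have "finite {A \<in> \<D>. A \<inter> V \<noteq> {}}"
  proof (cases "{A \<in> \<D>. A \<inter> V \<noteq> {}} = {}")
    case True
    then show ?thesis by (metis finite.emptyI)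
  next
    case False
    then obtain A where A: "A \<in> \<D>" "A \<inter> V \<noteq> {}" by blast
    have "{A \<in> \<D>. A \<inter> V \<noteq> {}} \<subseteq> {A}" using unique[OF _ A(1) _ A(2)] by blast
    then show ?thesis by (rule finite_subset) simp
  qed
  with V show "\<exists>V. openin X V \<and> x \<in> V \<and> finite {A \<in> \<D>. A \<inter> V \<noteq> {}}"
    by (intro exI[of _ V] conjI)
qed (rule assms(2))

lemma closedin_Union_discrete_family:
  assumes "discrete_family_in X \<D>" "\<And>A. A \<in> \<D> \<Longrightarrow> closedin X A"
  shows "closedin X (\<Union>\<D>)"
proof (rule closedin_locally_finite_Union)
  show "locally_finite_in X \<D>"
    using assms closedin_subset by (intro discrete_family_in_imp_locally_finite_in) blast+
qed (rule assms(2))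

lemma discrete_family_in_neighbourhood:
  assumes "discrete_family_in X \<D>" "A \<in> \<D>" "x \<in> A" "x \<in> topspace X"
  obtains N where "openin X N" "x \<in> N" "N \<inter> \<Union>\<D> \<subseteq> A"
proof -
  from assms(1,4) obtain N where N: "openin X N" "x \<in> N"
    and unique: "\<And>A B. A \<in> \<D> \<Longrightarrow> B \<in> \<D> \<Longrightarrow> A \<inter> N \<noteq> {} \<Longrightarrow> B \<inter> N \<noteq> {} \<Longrightarrow> A = B"
    by (rule discrete_family_inE) (rule that)
  have "N \<inter> \<Union>\<D> \<subseteq> A"
  proof
    fix y assume "y \<in> N \<inter> \<Union>\<D>"
    then obtain B where B: "B \<in> \<D>" "y \<in> B" "y \<in> N" by blast
    have "B \<inter> N \<noteq> {}" "A \<inter> N \<noteq> {}" using B(2,3) assms(3) N(2) by blast+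
    then have "B = A" by (rule unique[OF B(1) assms(2)])
    with B(2) show "y \<in> A" by simp
  qed
  with N show ?thesis by (rule that)
qed

lemma Baire_space_countable_cover:
  assumes "Baire_space X" "openin X U" "U \<noteq> {}" "U \<subseteq> (\<Union>n::nat. S n)"
  obtains n V where "openin X V" "V \<noteq> {}" "V \<subseteq> U" "V \<subseteq> X closure_of (S n)"
proof -
  have U: "U \<subseteq> topspace X" using assms(2) by (rule openin_subset)
  from assms(1) have "openin X U \<and> U \<noteq> {} \<longrightarrow> \<not> meager_in X U"
    unfolding Baire_space_def by (rule spec)
  with assms(2,3) have "\<not> meager_in X U" by simp
  have "\<exists>n. \<not> nowhere_dense_in X (U \<inter> S n)"
  proof (rule ccontr)
    assume "\<nexists>n. \<not> nowhere_dense_in X (U \<inter> S n)"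
    then have "meager_in X U"
      unfolding meager_in_def using U assms(4)
      by (intro conjI exI[of _ "range (\<lambda>n. U \<inter> S n)"]) (auto intro: countable_image)
    with \<open>\<not> meager_in X U\<close> show False by contradiction
  qed
  then obtain n where "\<not> nowhere_dense_in X (U \<inter> S n)" by blast
  then have W: "X interior_of (X closure_of (U \<inter> S n)) \<noteq> {}" (is "?W \<noteq> {}")
    using U unfolding nowhere_dense_in_def by auto
  have W_closure: "?W \<subseteq> X closure_of (U \<inter> S n)" by (rule interior_of_subset)
  have "?W \<subseteq> X closure_of U"
    using W_closure closure_of_mono[OF Int_lower1] by (rule order_trans)
  with W have "?W \<inter> X closure_of U \<noteq> {}" by (simp add: Int_absorb2)
  then have nonempty: "?W \<inter> U \<noteq> {}" by (simp add: openin_Int_closure_of_eq_empty)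
  have "?W \<subseteq> X closure_of (S n)"
    using W_closure closure_of_mono[OF Int_lower2] by (rule order_trans)
  then have dense: "?W \<inter> U \<subseteq> X closure_of (S n)" by blast
  have "openin X (?W \<inter> U)" using assms(2) by (simp add: openin_Int)
  then show ?thesis using nonempty Int_lower2 dense by (rule that)
qed

lemma Baire_space_dense_Inter:
  assumes "Baire_space X" "\<And>n::nat. openin X (G n)" "\<And>n. X closure_of (G n) = topspace X"
  shows "X closure_of (\<Inter>n. G n) = topspace X"
  unfolding dense_intersects_open
proof (intro allI impI, elim conjE)
  fix W assume W: "openin X W" "W \<noteq> {}"
  show "(\<Inter>n. G n) \<inter> W \<noteq> {}"
  proof
    assume "(\<Inter>n. G n) \<inter> W = {}"
    with openin_subset[OF W(1)] have cover: "W \<subseteq> (\<Union>n. topspace X - G n)" by blast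
    obtain n V where V: "openin X V" "V \<noteq> {}" "V \<subseteq> X closure_of (topspace X - G n)"
      using assms(1) W cover by (rule Baire_space_countable_cover)
    have "X closure_of (topspace X - G n) = topspace X - G n"
      by (simp add: assms(2) closedin_diff closure_of_closedin)
    with V(3) have "G n \<inter> V = {}" by blast
    moreover have "G n \<inter> V \<noteq> {}"
      using assms(3)[of n] V(1,2) unfolding dense_intersects_open by simp
    ultimately show False by contradiction
  qed
qed

definition equi_oscillation_below :: "'a topology \<Rightarrow> ('a \<Rightarrow> 'b::metric_space) set \<Rightarrow> real \<Rightarrow> 'a set" where
  "equi_oscillation_below X F e = \<Union>{V. openin X V \<and> (\<forall>f\<in>F. ediam (f ` V) < ereal e)}"

lemma openin_equi_oscillation_below: "openin X (equi_oscillation_below X F e)"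
  unfolding equi_oscillation_below_def by (rule openin_Union) auto

lemma equi_cliquish_imp_dense_equi_oscillation_below:
  assumes "equi_cliquish X F" "e > 0"
  shows "X closure_of (equi_oscillation_below X F e) = topspace X"
  unfolding dense_intersects_open
proof (intro allI impI)
  fix U assume U: "openin X U \<and> U \<noteq> {}"
  obtain V where V: "openin X V" "V \<noteq> {}" "V \<subseteq> U" "\<forall>f\<in>F. ediam (f ` V) < ereal e"
    using assms(1)[unfolded equi_cliquish_def, rule_format, OF assms(2) U] by blast
  then have "V \<subseteq> equi_oscillation_below X F e"
    unfolding equi_oscillation_below_def by blast
  with V(2,3) show "equi_oscillation_below X F e \<inter> U \<noteq> {}" by blast
qed

lemma EC_subset_equi_oscillation_below:
  assumes "e > 0"
  shows "EC X F \<subseteq> equi_oscillation_below X F e"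
proof
  fix x assume "x \<in> EC X F"
  then have EC_x: "\<exists>U. openin X U \<and> x \<in> U \<and> (\<forall>y\<in>U. \<forall>f\<in>F. dist (f y) (f x) < \<epsilon>)"
    if "\<epsilon> > 0" for \<epsilon>
    using that unfolding EC_def by blast
  obtain U where U: "openin X U" "x \<in> U" and near: "\<forall>y\<in>U. \<forall>f\<in>F. dist (f y) (f x) < e/3"
    using EC_x[of "e/3"] assms by auto
  have "ediam (f ` U) < ereal e" if "f \<in> F" for f
  proof -
    have "ediam (f ` U) \<le> ereal (2 * (e/3))"
      using near that by (intro ediam_le_twice_radius[where c = "f x"]) (auto intro: less_imp_le)
    also have "\<dots> < ereal e" using assms by simp
    finally show ?thesis .
  qed
  with U(1) have "U \<subseteq> equi_oscillation_below X F e"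
    unfolding equi_oscillation_below_def by blast
  with U(2) show "x \<in> equi_oscillation_below X F e" by blast
qed

lemma Inter_equi_oscillation_below_subset_EC:
  "(\<Inter>n. equi_oscillation_below X F (1 / Suc n)) \<subseteq> EC X F"
proof
  fix x assume x: "x \<in> (\<Inter>n. equi_oscillation_below X F (1 / Suc n))"
  then have "x \<in> equi_oscillation_below X F (1 / Suc 0)" by blast
  then have "x \<in> topspace X"
    using openin_subset[OF openin_equi_oscillation_below[of X F "1 / Suc 0"]] by blast
  moreover have "\<exists>U. openin X U \<and> x \<in> U \<and> (\<forall>y\<in>U. \<forall>f\<in>F. dist (f y) (f x) < e)"
    if "e > 0" for e
  proof -
    obtain n where n: "1 / Suc n < e" using \<open>e > 0\<close> nat_approx_posE by blast
    from x have "x \<in> equi_oscillation_below X F (1 / Suc n)" by blast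
    then obtain U where U: "openin X U" "x \<in> U"
      and small: "\<forall>f\<in>F. ediam (f ` U) < ereal (1 / Suc n)"
      unfolding equi_oscillation_below_def by blast
    have "dist (f y) (f x) < e" if "y \<in> U" "f \<in> F" for y f
    proof -
      have "ereal (dist (f y) (f x)) \<le> ediam (f ` U)"
        using U(2) that(1) by (intro dist_le_ediam) simp_all
      also have "\<dots> < ereal (1 / Suc n)" using small that(2) by blast
      finally show ?thesis using n by simp
    qed
    with U show ?thesis by blast
  qed
  ultimately show "x \<in> EC X F" unfolding EC_def by blast
qed

lemma EC_eq_Inter_equi_oscillation_below:
  "EC X F = (\<Inter>n. equi_oscillation_below X F (1 / Suc n))"
  by (intro equalityI INT_greatest EC_subset_equi_oscillation_below
      Inter_equi_oscillation_below_subset_EC) simp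

lemma equi_cliquish_imp_EC_dense_gdelta:
  assumes "Baire_space X" "equi_cliquish X F"
  shows "X closure_of (EC X F) = topspace X \<and> gdelta_in X (EC X F)"
  unfolding EC_eq_Inter_equi_oscillation_below
proof
  show "X closure_of (\<Inter>n. equi_oscillation_below X F (1 / Suc n)) = topspace X"
    using assms by (intro Baire_space_dense_Inter openin_equi_oscillation_below
        equi_cliquish_imp_dense_equi_oscillation_below) auto
  show "gdelta_in X (\<Inter>n. equi_oscillation_below X F (1 / Suc n))"
    by (intro gdelta_in_Inter) (auto intro: open_imp_gdelta_in openin_equi_oscillation_below)
qed

lemma equi_GLP_imp_equi_cliquish:
  assumes B: "Baire_space X" and GLP: "equi_GLP X F"
  shows "equi_cliquish X F"
  unfolding equi_cliquish_def
proof (intro allI impI)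
  fix e :: real and U assume e: "e > 0" and U: "openin X U \<and> U \<noteq> {}"
  obtain \<A> where \<A>: "sigma_discrete_in X \<A>" "\<forall>A\<in>\<A>. closedin X A" "\<Union>\<A> = topspace X"
    and small: "\<forall>A\<in>\<A>. \<forall>f\<in>F. ediam (f ` A) \<le> ereal (e/2)"
    using GLP[unfolded equi_GLP_def, rule_format, of "e/2"] e by auto
  obtain \<D> :: "nat \<Rightarrow> 'a set set" where \<D>: "\<And>n. discrete_family_in X (\<D> n)" "\<A> = (\<Union>n. \<D> n)"
    using \<A>(1) unfolding sigma_discrete_in_def by blast
  have cover: "U \<subseteq> (\<Union>n. \<Union>(\<D> n))" using openin_subset[of X U] U \<A>(3) \<D>(2) by blast
  obtain n V0 where V0: "openin X V0" "V0 \<noteq> {}" "V0 \<subseteq> U" "V0 \<subseteq> X closure_of \<Union>(\<D> n)"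
    using B U[THEN conjunct1] U[THEN conjunct2] cover by (rule Baire_space_countable_cover)
  have "closedin X (\<Union>(\<D> n))"
    using \<A>(2) \<D> by (intro closedin_Union_discrete_family) auto
  with V0(4) have V0_covered: "V0 \<subseteq> \<Union>(\<D> n)" by (simp add: closure_of_closedin)
  with V0(2) obtain x A where x: "x \<in> V0" "x \<in> A" "A \<in> \<D> n" by blast
  have "x \<in> topspace X" using x(1) openin_subset[OF V0(1)] by blast
  with \<D>(1)[of n] x(3,2) obtain N where N: "openin X N" "x \<in> N" "N \<inter> \<Union>(\<D> n) \<subseteq> A"
    by (rule discrete_family_in_neighbourhood)
  define V where "V = V0 \<inter> N"
  have "V \<subseteq> A" using V0_covered N(3) unfolding V_def by blast
  show "\<exists>V. openin X V \<and> V \<noteq> {} \<and> V \<subseteq> U \<and> (\<forall>f\<in>F. ediam (f ` V) < ereal e)"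
  proof (intro exI conjI ballI)
    show "openin X V" using V0(1) N(1) unfolding V_def by (rule openin_Int)
    show "V \<noteq> {}" using x(1) N(2) unfolding V_def by blast
    show "V \<subseteq> U" using V0(3) unfolding V_def by blast
    fix f assume "f \<in> F"
    have "ediam (f ` V) \<le> ediam (f ` A)" using \<open>V \<subseteq> A\<close> by (intro ediam_mono image_mono)
    also have "\<dots> \<le> ereal (e/2)" using small \<D>(2) x(3) \<open>f \<in> F\<close> by blast
    also have "\<dots> < ereal e" using e by simp
    finally show "ediam (f ` V) < ereal e" .
  qed
qed

lemma (in Metric_space) dist_to_centre_lt_on_gauge_ball:
  assumes \<delta>_pos: "\<forall>x\<in>M. \<delta> x > 0"
    and \<delta>: "\<forall>x\<in>M. \<forall>y\<in>M. \<forall>f\<in>F. d x y < min (\<delta> x) (\<delta> y) \<longrightarrow> dist (f x) (f y) < \<eta>"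
    and x: "t < \<delta> x" and dense: "mball x t \<subseteq> mtopology closure_of {z\<in>M. t < \<delta> z}"
    and y: "y \<in> mball x t" and f: "f \<in> F"
  shows "dist (f y) (f x) < 2 * \<eta>"
proof -
  have "x \<in> M" "y \<in> M" using y by simp_all
  have "y \<in> mtopology closure_of (mball x t \<inter> {z\<in>M. t < \<delta> z})"
    using openin_Int_closure_of_subset[OF openin_mball] y dense by blast
  then have approx: "\<forall>r>0. \<exists>z\<in>mball x t \<inter> {z\<in>M. t < \<delta> z}. z \<in> mball y r"
    unfolding metric_closure_of by blast
  have "0 < t" using y by (meson in_mball le_less_trans nonneg)
  then have "min (\<delta> y) t > 0" using \<delta>_pos \<open>y \<in> M\<close> by simp
  with approx obtain z where z: "z \<in> mball x t" "t < \<delta> z" "z \<in> mball y (min (\<delta> y) t)"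
    by blast
  have "z \<in> M" using z(1) by simp
  have "d x z < min (\<delta> x) (\<delta> z)" using z(1,2) x by simp
  then have xz: "dist (f x) (f z) < \<eta>" by (rule \<delta>[rule_format, OF \<open>x \<in> M\<close> \<open>z \<in> M\<close> f])
  have "d y z < min (\<delta> y) (\<delta> z)" using z(2,3) by simp
  then have yz: "dist (f y) (f z) < \<eta>" by (rule \<delta>[rule_format, OF \<open>y \<in> M\<close> \<open>z \<in> M\<close> f])
  from xz yz show ?thesis using dist_triangle2[of "f y" "f x" "f z"] by linarith
qed

lemma (in Metric_space) equi_Baire1_imp_equi_cliquish:
  assumes B: "Baire_space mtopology" and EB: "equi_Baire1 M d F"
  shows "equi_cliquish mtopology F"
  unfolding equi_cliquish_def
proof (intro allI impI)
  fix e :: real and U assume e: "e > 0" and U: "openin mtopology U \<and> U \<noteq> {}"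
  obtain \<delta> where \<delta>_pos: "\<forall>x\<in>M. \<delta> x > 0"
    and \<delta>: "\<forall>x\<in>M. \<forall>y\<in>M. \<forall>f\<in>F. d x y < min (\<delta> x) (\<delta> y) \<longrightarrow> dist (f x) (f y) < e/6"
    using EB[unfolded equi_Baire1_def, rule_format, of "e/6"] e by auto
  define E where "E k = {x\<in>M. 1 / Suc k < \<delta> x}" for k :: nat
  have cover: "U \<subseteq> (\<Union>k. E k)"
  proof
    fix x assume "x \<in> U"
    with openin_subset[of mtopology U] U have "x \<in> M" by auto
    then obtain k where "1 / Suc k < \<delta> x" using \<delta>_pos nat_approx_posE by blast
    with \<open>x \<in> M\<close> show "x \<in> (\<Union>k. E k)" unfolding E_def by blast
  qed
  obtain k V0 where V0: "openin mtopology V0" "V0 \<noteq> {}" "V0 \<subseteq> U"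
    "V0 \<subseteq> mtopology closure_of (E k)"
    using B U[THEN conjunct1] U[THEN conjunct2] cover by (rule Baire_space_countable_cover)
  have "V0 \<inter> mtopology closure_of (E k) \<noteq> {}" using V0(2,4) by (simp add: Int_absorb2)
  then have "V0 \<inter> E k \<noteq> {}" by (simp add: openin_Int_closure_of_eq_empty[OF V0(1)])
  then obtain x where x: "x \<in> V0" "x \<in> E k" by blast
  obtain r where r: "r > 0" "mball x r \<subseteq> V0"
    using V0(1) x(1) unfolding openin_mtopology by blast
  define t where "t = min r (1 / Suc k)"
  have "x \<in> M" "t < \<delta> x" using x(2) unfolding E_def t_def by auto
  have "mball x t \<subseteq> V0" using r(2) mball_subset_concentric[of t r x] unfolding t_def by simp
  moreover have "E k \<subseteq> {z\<in>M. t < \<delta> z}" unfolding E_def t_def by auto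
  ultimately have dense: "mball x t \<subseteq> mtopology closure_of {z\<in>M. t < \<delta> z}"
    using V0(4) closure_of_mono by blast
  show "\<exists>V. openin mtopology V \<and> V \<noteq> {} \<and> V \<subseteq> U \<and> (\<forall>f\<in>F. ediam (f ` V) < ereal e)"
  proof (intro exI conjI ballI)
    show "openin mtopology (mball x t)" by simp
    have "x \<in> mball x t" using \<open>x \<in> M\<close> r(1) unfolding t_def by simp
    then show "mball x t \<noteq> {}" by blast
    show "mball x t \<subseteq> U" using \<open>mball x t \<subseteq> V0\<close> V0(3) by blast
    fix f assume "f \<in> F"
    have "ediam (f ` mball x t) \<le> ereal (2 * (2 * (e/6)))"
      using dist_to_centre_lt_on_gauge_ball[OF \<delta>_pos \<delta> \<open>t < \<delta> x\<close> dense _ \<open>f \<in> F\<close>]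
      by (intro ediam_le_twice_radius[where c = "f x"]) (auto intro: less_imp_le)
    also have "\<dots> < ereal e" using e by simp
    finally show "ediam (f ` mball x t) < ereal e" .
  qed
qed

theorem proposition3p7:
  fixes X :: "'a topology" and F :: "('a \<Rightarrow> 'b::metric_space) set"
  assumes "Baire_space X"
  shows "(equi_cliquish X F \<longrightarrow> X closure_of (EC X F) = topspace X \<and> gdelta_in X (EC X F))
       \<and> (equi_GLP X F \<longrightarrow> X closure_of (EC X F) = topspace X \<and> gdelta_in X (EC X F))
       \<and> (\<forall>M \<rho>. Metric_space M \<rho> \<and> X = Metric_space.mtopology M \<rho> \<and> equi_Baire1 M \<rho> F \<longrightarrow>
            X closure_of (EC X F) = topspace X \<and> gdelta_in X (EC X F))"
proof -
  have "equi_cliquish X F \<Longrightarrow> X closure_of (EC X F) = topspace X \<and> gdelta_in X (EC X F)"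
    using assms by (rule equi_cliquish_imp_EC_dense_gdelta)
  moreover have "equi_GLP X F \<Longrightarrow> equi_cliquish X F"
    using assms by (rule equi_GLP_imp_equi_cliquish)
  moreover have "equi_cliquish X F"
    if "Metric_space M \<rho>" "X = Metric_space.mtopology M \<rho>" "equi_Baire1 M \<rho> F" for M \<rho>
    using Metric_space.equi_Baire1_imp_equi_cliquish[OF that(1)] assms that(3)
    unfolding that(2) by blast
  ultimately show ?thesis by blast
qed

end
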